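(* Let $G$ be a $k$-group and $A$ a continuous $G$-module (in the $k$-sense). Then the row augmentation $j_{h,k}^*\colon C_{lc,k}^*(G,A)\hookrightarrow\mathrm{Tot}\,A_{lc,k}^{*,*}(G,A)^G$ induces an isomorphism in cohomology.
   Context: For a topological space $X$, $\mathrm{k}X$ denotes its $k$-ification; products of $k$-spaces are taken as $\mathrm{k}(X\times Y)$ and denoted $\times_k$. A $k$-group is a group $G$ with a topology such that multiplication is continuous on $\mathrm{k}(G\times G)$; a continuous $G$-module here is an abelian topological group $A$ with an action of $G$ by automorphisms continuous on $\mathrm{k}(G\times A)$. For an identity neighbourhood $U$ put $\Gamma_U^0:=G$ and, for $q\ge1$, $\Gamma_U^q:=\{(g_0,\dots,g_q)\in G^{q+1}\mid g_i^{-1}g_j\in U\ \forall i,j\}$. $G$ acts on maps $f\colon G^{n+1}\to A$ by $(g.f)(g_0,\dots,g_n)=g.f(g^{-1}g_0,\dots,g^{-1}g_n)$, with differential $df(g_0,\dots,g_{n+1})=\sum_i(-1)^if(g_0,\dots,\widehat{g_i},\dots,g_{n+1})$. $C_{lc,k}^n(G,A)$ is the complex of $G$-equivariant maps $f\colon G^{n+1}\to A$ such that for some identity neighbourhood $U$ the restriction to $\mathrm{k}\Gamma_U^n$ is continuous. $A_{lc,k}^{p,q}(G,A)$ is the group of maps $f\colon G^{p+1}\times G^{q+1}\to A$ such that for some identity neighbourhood $U$ the restriction to $\mathrm{k}G^{p+1}\times_k\mathrm{k}\Gamma_U^q$ is continuous, with $d_hf(x_0,\dots,x_{p+1},\vec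 y)=\sum_i(-1)^if(x_0,\dots,\widehat{x_i},\dots,x_{p+1},\vec y)$ and $d_vf(\vec x,y_0,\dots,y_{q+1})=(-1)^p\sum_i(-1)^if(\vec x,y_0,\dots,\widehat{y_i},\dots,y_{q+1})$. $G$ acts by $(g.f)(\vec x,\vec y)=g.f(g^{-1}\vec x,g^{-1}\vec y)$; $\mathrm{Tot}\,A_{lc,k}^{*,*}(G,A)^G$ is the total complex of the fixed-point double complex (differential $d_h+d_v$), and $j_{h,k}(f)(x_0,\vec y)=f(\vec y)$. *)

theory Defs
  imports "HOL-Analysis.Analysis" "HOL-Algebra.Group" "HOL-Library.Function_Algebras"
begin

definition kify :: "'a topology \<Rightarrow> 'a topology" where
  "kify X = topology (\<lambda>U. U \<subseteq> topspace X \<and>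
      (\<forall>K. compactin X K \<longrightarrow> openin (subtopology X K) (K \<inter> U)))"

lemma istopology_kify:
  "istopology (\<lambda>U. U \<subseteq> topspace X \<and>
      (\<forall>K. compactin X K \<longrightarrow> openin (subtopology X K) (K \<inter> U)))"
  unfolding istopology_def
proof (rule conjI; intro allI impI)
  fix S T assume a: "S \<subseteq> topspace X \<and> (\<forall>K. compactin X K \<longrightarrow> openin (subtopology X K) (K \<inter> S))"
    "T \<subseteq> topspace X \<and> (\<forall>K. compactin X K \<longrightarrow> openin (subtopology X K) (K \<inter> T))"
  show "S \<inter> T \<subseteq> topspace X \<and> (\<forall>K. compactin X K \<longrightarrow> openin (subtopology X K) (K \<inter> (S \<inter> T)))"
  proof (intro conjI allI impI)
    show "S \<inter> T \<subseteq> topspace X" using a by blast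
    fix K assume "compactin X K"
    then have "openin (subtopology X K) ((K \<inter> S) \<inter> (K \<inter> T))" using a by blast
    moreover have "(K \<inter> S) \<inter> (K \<inter> T) = K \<inter> (S \<inter> T)" by blast
    ultimately show "openin (subtopology X K) (K \<inter> (S \<inter> T))" by simp
  qed
next
  fix \<K> assume a: "\<forall>U\<in>\<K>. U \<subseteq> topspace X \<and> (\<forall>K. compactin X K \<longrightarrow> openin (subtopology X K) (K \<inter> U))"
  show "\<Union>\<K> \<subseteq> topspace X \<and> (\<forall>K. compactin X K \<longrightarrow> openin (subtopology X K) (K \<inter> \<Union>\<K>))"
  proof (intro conjI allI impI)
    show "\<Union>\<K> \<subseteq> topspace X" using a by blast
    fix K assume "compactin X K"
    then have "openin (subtopology X K) (\<Union>U\<in>\<K>. K \<inter> U)" using a by blast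
    moreover have "(\<Union>U\<in>\<K>. K \<inter> U) = K \<inter> \<Union>\<K>" by blast
    ultimately show "openin (subtopology X K) (K \<inter> \<Union>\<K>)" by simp
  qed
qed

lemma openin_kify:
  "openin (kify X) U \<longleftrightarrow> U \<subseteq> topspace X \<and>
      (\<forall>K. compactin X K \<longrightarrow> openin (subtopology X K) (K \<inter> U))"
  unfolding kify_def by (simp add: istopology_kify)

definition kprod :: "'a topology \<Rightarrow> 'b topology \<Rightarrow> ('a \<times> 'b) topology" where
  "kprod X Y = kify (prod_topology X Y)"

definition k_group :: "('g, 'b) monoid_scheme \<Rightarrow> 'g topology \<Rightarrow> bool" where
  "k_group G T \<longleftrightarrow> group G \<and> topspace T = carrier G \<and>
     continuous_map (kprod T T) T (\<lambda>(g, h). g \<otimes>\<^bsub>G\<^esub> h)"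

text \<open>Abelian topological group: the abelian group is the type 'a (all of it), with topology TA.\<close>
definition ab_top_group :: "('a::ab_group_add) topology \<Rightarrow> bool" where
  "ab_top_group TA \<longleftrightarrow> topspace TA = UNIV \<and>
     continuous_map (prod_topology TA TA) TA (\<lambda>(a, b). a + b) \<and>
     continuous_map TA TA uminus"

definition cont_G_module ::
  "('g, 'b) monoid_scheme \<Rightarrow> 'g topology \<Rightarrow> ('a::ab_group_add) topology \<Rightarrow> ('g \<Rightarrow> 'a \<Rightarrow> 'a) \<Rightarrow> bool" where
  "cont_G_module G T TA act \<longleftrightarrow> ab_top_group TA \<and>
     (\<forall>a. act \<one>\<^bsub>G\<^esub> a = a) \<and>
     (\<forall>g\<in>carrier G. \<forall>h\<in>carrier G. \<forall>a. act (g \<otimes>\<^bsub>G\<^esub> h) a = act g (act h a)) \<and>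
     (\<forall>g\<in>carrier G. \<forall>a b. act g (a + b) = act g a + act g b) \<and>
     (\<forall>g\<in>carrier G. bij (act g)) \<and>
     continuous_map (kprod T TA) TA (\<lambda>(g, a). act g a)"

text \<open>G^{n+1} is represented by extensional functions {..n} \<rightarrow> carrier G.\<close>
definition tuples :: "('g, 'b) monoid_scheme \<Rightarrow> nat \<Rightarrow> (nat \<Rightarrow> 'g) set" where
  "tuples G n = {..n} \<rightarrow>\<^sub>E carrier G"

definition tuple_top :: "'g topology \<Rightarrow> nat \<Rightarrow> (nat \<Rightarrow> 'g) topology" where
  "tuple_top T n = product_topology (\<lambda>_. T) {..n}"

text \<open>Omit the i-th entry of an (n+1)-tuple (x_0,...,x_n), giving an n-tuple.\<close>
definition omit :: "nat \<Rightarrow> nat \<Rightarrow> (nat \<Rightarrow> 'g) \<Rightarrow> (nat \<Rightarrow> 'g)" where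
  "omit n i x = (\<lambda>j. if j < n then (if j < i then x j else x (Suc j)) else undefined)"

definition ltrans :: "('g, 'b) monoid_scheme \<Rightarrow> nat \<Rightarrow> 'g \<Rightarrow> (nat \<Rightarrow> 'g) \<Rightarrow> (nat \<Rightarrow> 'g)" where
  "ltrans G n g x = restrict (\<lambda>j. g \<otimes>\<^bsub>G\<^esub> x j) {..n}"

definition identity_nbhd :: "('g, 'b) monoid_scheme \<Rightarrow> 'g topology \<Rightarrow> 'g set \<Rightarrow> bool" where
  "identity_nbhd G T U \<longleftrightarrow> U \<subseteq> carrier G \<and> (\<exists>V. openin T V \<and> \<one>\<^bsub>G\<^esub> \<in> V \<and> V \<subseteq> U)"

text \<open>\<Gamma>_U^q; for q = 0 this is all of G (as 1 \<in> U).\<close>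
definition Gamma :: "('g, 'b) monoid_scheme \<Rightarrow> 'g set \<Rightarrow> nat \<Rightarrow> (nat \<Rightarrow> 'g) set" where
  "Gamma G U q = {x \<in> tuples G q. \<forall>i\<le>q. \<forall>j\<le>q. inv\<^bsub>G\<^esub> (x i) \<otimes>\<^bsub>G\<^esub> x j \<in> U}"

definition sgn_sum :: "nat \<Rightarrow> (nat \<Rightarrow> 'a::ab_group_add) \<Rightarrow> 'a" where
  "sgn_sum m t = (\<Sum>i\<le>m. (if even i then t i else - t i))"

definition C_lck ::
  "('g, 'b) monoid_scheme \<Rightarrow> 'g topology \<Rightarrow> ('a::ab_group_add) topology \<Rightarrow> ('g \<Rightarrow> 'a \<Rightarrow> 'a)
   \<Rightarrow> nat \<Rightarrow> ((nat \<Rightarrow> 'g) \<Rightarrow> 'a) set" where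
  "C_lck G T TA act n = {f.
     (\<forall>x. x \<notin> tuples G n \<longrightarrow> f x = 0) \<and>
     (\<forall>g\<in>carrier G. \<forall>x\<in>tuples G n. act g (f (ltrans G n (inv\<^bsub>G\<^esub> g) x)) = f x) \<and>
     (\<exists>U. identity_nbhd G T U \<and>
        continuous_map (kify (subtopology (tuple_top T n) (Gamma G U n))) TA f)}"

definition d_C :: "('g, 'b) monoid_scheme \<Rightarrow> nat \<Rightarrow> ((nat \<Rightarrow> 'g) \<Rightarrow> 'a::ab_group_add) \<Rightarrow> ((nat \<Rightarrow> 'g) \<Rightarrow> 'a)" where
  "d_C G n f = (\<lambda>x. if x \<in> tuples G (Suc n) then sgn_sum (Suc n) (\<lambda>i. f (omit (Suc n) i x)) else 0)"

definition A_lck ::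
  "('g, 'b) monoid_scheme \<Rightarrow> 'g topology \<Rightarrow> ('a::ab_group_add) topology
   \<Rightarrow> nat \<Rightarrow> nat \<Rightarrow> ((nat \<Rightarrow> 'g) \<Rightarrow> (nat \<Rightarrow> 'g) \<Rightarrow> 'a) set" where
  "A_lck G T TA p q = {f.
     (\<forall>x y. \<not> (x \<in> tuples G p \<and> y \<in> tuples G q) \<longrightarrow> f x y = 0) \<and>
     (\<exists>U. identity_nbhd G T U \<and>
        continuous_map (kprod (kify (tuple_top T p)) (kify (subtopology (tuple_top T q) (Gamma G U q))))
          TA (\<lambda>(x, y). f x y))}"

definition A_lck_fixed ::
  "('g, 'b) monoid_scheme \<Rightarrow> 'g topology \<Rightarrow> ('a::ab_group_add) topology \<Rightarrow> ('g \<Rightarrow> 'a \<Rightarrow> 'a)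
   \<Rightarrow> nat \<Rightarrow> nat \<Rightarrow> ((nat \<Rightarrow> 'g) \<Rightarrow> (nat \<Rightarrow> 'g) \<Rightarrow> 'a) set" where
  "A_lck_fixed G T TA act p q = {f \<in> A_lck G T TA p q.
     \<forall>g\<in>carrier G. \<forall>x\<in>tuples G p. \<forall>y\<in>tuples G q.
        act g (f (ltrans G p (inv\<^bsub>G\<^esub> g) x) (ltrans G q (inv\<^bsub>G\<^esub> g) y)) = f x y}"

definition d_h :: "('g, 'b) monoid_scheme \<Rightarrow> nat \<Rightarrow> nat
   \<Rightarrow> ((nat \<Rightarrow> 'g) \<Rightarrow> (nat \<Rightarrow> 'g) \<Rightarrow> 'a::ab_group_add) \<Rightarrow> ((nat \<Rightarrow> 'g) \<Rightarrow> (nat \<Rightarrow> 'g) \<Rightarrow> 'a)" where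
  "d_h G p q f = (\<lambda>x y. if x \<in> tuples G (Suc p) \<and> y \<in> tuples G q
      then sgn_sum (Suc p) (\<lambda>i. f (omit (Suc p) i x) y) else 0)"

definition d_v :: "('g, 'b) monoid_scheme \<Rightarrow> nat \<Rightarrow> nat
   \<Rightarrow> ((nat \<Rightarrow> 'g) \<Rightarrow> (nat \<Rightarrow> 'g) \<Rightarrow> 'a::ab_group_add) \<Rightarrow> ((nat \<Rightarrow> 'g) \<Rightarrow> (nat \<Rightarrow> 'g) \<Rightarrow> 'a)" where
  "d_v G p q f = (\<lambda>x y. if x \<in> tuples G p \<and> y \<in> tuples G (Suc q)
      then (if even p then id else uminus) (sgn_sum (Suc q) (\<lambda>i. f x (omit (Suc q) i y))) else 0)"

text \<open>Tot^n = \<Oplus>_{p+q=n} A^{p,q}(G,A)^G, an element being the family of its components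
  F p \<in> A^{p,n-p} (p \<le> n), with F p = 0 for p > n.\<close>
definition Tot ::
  "('g, 'b) monoid_scheme \<Rightarrow> 'g topology \<Rightarrow> ('a::ab_group_add) topology \<Rightarrow> ('g \<Rightarrow> 'a \<Rightarrow> 'a)
   \<Rightarrow> nat \<Rightarrow> (nat \<Rightarrow> (nat \<Rightarrow> 'g) \<Rightarrow> (nat \<Rightarrow> 'g) \<Rightarrow> 'a) set" where
  "Tot G T TA act n = {F. (\<forall>p\<le>n. F p \<in> A_lck_fixed G T TA act p (n - p)) \<and> (\<forall>p>n. F p = 0)}"

definition d_Tot :: "('g, 'b) monoid_scheme \<Rightarrow> nat
   \<Rightarrow> (nat \<Rightarrow> (nat \<Rightarrow> 'g) \<Rightarrow> (nat \<Rightarrow> 'g) \<Rightarrow> 'a::ab_group_add) \<Rightarrow> (nat \<Rightarrow> (nat \<Rightarrow> 'g) \<Rightarrow> (nat \<Rightarrow> 'g) \<Rightarrow> 'a)" where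
  "d_Tot G n F = (\<lambda>p. if p \<le> Suc n then
       (if 0 < p then d_h G (p - 1) (n - (p - 1)) (F (p - 1)) else 0)
     + (if p \<le> n then d_v G p (n - p) (F p) else 0)
     else 0)"

definition j_hk :: "('g, 'b) monoid_scheme \<Rightarrow> nat \<Rightarrow> ((nat \<Rightarrow> 'g) \<Rightarrow> 'a::ab_group_add)
   \<Rightarrow> (nat \<Rightarrow> (nat \<Rightarrow> 'g) \<Rightarrow> (nat \<Rightarrow> 'g) \<Rightarrow> 'a)" where
  "j_hk G n f = (\<lambda>p x y. if p = 0 \<and> x \<in> tuples G 0 \<and> y \<in> tuples G n then f y else 0)"

text \<open>A cochain complex is given by its groups of cochains K n (subgroups of an ambient
  abelian group) and differentials \<delta> n : K n \<rightarrow> K (n+1).\<close>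
definition cocycles :: "(nat \<Rightarrow> 'c set) \<Rightarrow> (nat \<Rightarrow> 'c \<Rightarrow> 'c::ab_group_add) \<Rightarrow> nat \<Rightarrow> 'c set" where
  "cocycles K \<delta> n = {c \<in> K n. \<delta> n c = 0}"

definition coboundaries :: "(nat \<Rightarrow> 'c set) \<Rightarrow> (nat \<Rightarrow> 'c \<Rightarrow> 'c::ab_group_add) \<Rightarrow> nat \<Rightarrow> 'c set" where
  "coboundaries K \<delta> n = (if n = 0 then {0} else \<delta> (n - 1) ` K (n - 1))"

text \<open>\<phi> is a cochain map and the induced map H^n(K) = Z^n/B^n \<rightarrow> H^n(K') = Z'^n/B'^n,
  [c] \<mapsto> [\<phi> c], is bijective for every n (surjective; injective = trivial kernel).\<close>
definition cohomology_iso ::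
  "(nat \<Rightarrow> 'c set) \<Rightarrow> (nat \<Rightarrow> 'c \<Rightarrow> 'c::ab_group_add)
   \<Rightarrow> (nat \<Rightarrow> 'd set) \<Rightarrow> (nat \<Rightarrow> 'd \<Rightarrow> 'd::ab_group_add) \<Rightarrow> (nat \<Rightarrow> 'c \<Rightarrow> 'd) \<Rightarrow> bool" where
  "cohomology_iso K \<delta> K' \<delta>' \<phi> \<longleftrightarrow>
     (\<forall>n. \<forall>c\<in>K n. \<phi> n c \<in> K' n \<and> \<delta>' n (\<phi> n c) = \<phi> (Suc n) (\<delta> n c)) \<and>
     (\<forall>n. \<forall>z\<in>cocycles K' \<delta>' n. \<exists>c\<in>cocycles K \<delta> n. z - \<phi> n c \<in> coboundaries K' \<delta>' n) \<and>
     (\<forall>n. \<forall>c\<in>cocycles K \<delta> n. \<phi> n c \<in> coboundaries K' \<delta>' n \<longrightarrow> c \<in> coboundaries K \<delta> n)"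

end

theory Submission
  imports Defs
begin

text \<open>Each row of the double complex is exact and augmented by C_{lc,k}: the contraction
  s F (x_0,...,x_p; y) = F (y_0, x_0, ..., x_p; y) is again G-equivariant and continuous on
  kG^{p+1} \<times>_k k\<Gamma>_U^q, and it inverts d_h on d_h-closed cochains. A staircase argument
  therefore moves every total cochain whose differential lives in column 0, modulo coboundaries,
  into column 0, where being d_h-closed means lying in the image of j_{h,k}.\<close>

section \<open>k-ification\<close>

lemma openin_kify_openin: "openin X U \<Longrightarrow> openin (kify X) U"
  unfolding openin_kify by (simp add: openin_subset openin_subtopology_Int2)

lemma topspace_kify [simp]: "topspace (kify X) = topspace X"
proof -
  have "openin (kify X) (topspace X)"
    by (rule openin_kify_openin) simp
  then show ?thesis
    by (metis openin_kify openin_subset openin_topspace subset_antisym)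
qed

lemma continuous_map_kify_id: "continuous_map (kify X) X id"
proof -
  have "{x \<in> topspace X. x \<in> U} = U" if "openin X U" for U
    using openin_subset[OF that] by blast
  then show ?thesis
    by (auto simp: continuous_map_def openin_kify_openin)
qed

lemma subtopology_kify:
  assumes "compactin X K"
  shows "subtopology (kify X) K = subtopology X K"
  unfolding topology_eq
proof (intro allI iffI)
  fix S assume "openin (subtopology (kify X) K) S"
  then obtain U where "openin (kify X) U" "S = U \<inter> K"
    unfolding openin_subtopology by blast
  then show "openin (subtopology X K) S"
    using assms unfolding openin_kify by (metis inf_commute)
next
  fix S assume "openin (subtopology X K) S"
  then show "openin (subtopology (kify X) K) S"
    unfolding openin_subtopology using openin_kify_openin by blast
qed

lemma continuous_map_kify:
  assumes f: "continuous_map X Y f"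
  shows "continuous_map (kify X) (kify Y) f"
  unfolding continuous_map_def
proof (intro conjI allI impI)
  show "f \<in> topspace (kify X) \<rightarrow> topspace (kify Y)"
    using continuous_map_funspace[OF f] by simp
  fix U assume U: "openin (kify Y) U"
  show "openin (kify X) {x \<in> topspace (kify X). f x \<in> U}"
    unfolding openin_kify
  proof (intro conjI allI impI)
    fix K assume K: "compactin X K"
    have "openin (subtopology Y (f ` K)) (f ` K \<inter> U)"
      using U image_compactin[OF K f] unfolding openin_kify by blast
    then obtain U' where U': "openin Y U'" "f ` K \<inter> U = U' \<inter> f ` K"
      by (auto simp: openin_subtopology)
    have "K \<inter> {x \<in> topspace (kify X). f x \<in> U} = K \<inter> {x \<in> topspace X. f x \<in> U'}"
      using U'(2) by auto
    moreover have "openin X {x \<in> topspace X. f x \<in> U'}"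
      using f U'(1) unfolding continuous_map_def by blast
    ultimately show "openin (subtopology X K) (K \<inter> {x \<in> topspace (kify X). f x \<in> U})"
      by (metis openin_subtopology_Int2)
  qed auto
qed

text \<open>A compact subset K of X \<times> Y lies in the compact rectangle fst K \<times> snd K, on which the
  k-ified factors induce the original topology.\<close>

lemma kprod_kify: "kprod (kify X) (kify Y) = kprod X Y"
proof -
  let ?P1 = "prod_topology (kify X) (kify Y)" and ?P2 = "prod_topology X Y"
  have id: "continuous_map ?P1 ?P2 id"
    using continuous_map_compose[OF continuous_map_fst[of "kify X" "kify Y"] continuous_map_kify_id]
      continuous_map_compose[OF continuous_map_snd[of "kify X" "kify Y"] continuous_map_kify_id]
    unfolding continuous_map_pairwise by simp
  have sub: "subtopology ?P1 K = subtopology ?P2 K" if K: "compactin ?P2 K" for K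
  proof -
    have "compactin X (fst ` K)" "compactin Y (snd ` K)"
      using image_compactin[OF K continuous_map_fst] image_compactin[OF K continuous_map_snd] by auto
    then have "subtopology ?P1 (fst ` K \<times> snd ` K) = subtopology ?P2 (fst ` K \<times> snd ` K)"
      by (simp only: subtopology_Times subtopology_kify)
    moreover have "K \<subseteq> fst ` K \<times> snd ` K"
      by (force simp: mem_Times_iff)
    ultimately show ?thesis
      by (metis inf.absorb_iff2 subtopology_subtopology)
  qed
  have "compactin ?P1 K \<longleftrightarrow> compactin ?P2 K" for K
    using image_compactin[OF _ id, of K] sub[of K]
    by (auto simp: compactin_subspace[of ?P1 K] compactin_subspace[of ?P2 K])
  then show ?thesis
    unfolding kprod_def topology_eq openin_kify topspace_prod_topology topspace_kify by (simp add: sub)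
qed

definition alt_sign :: "nat \<Rightarrow> 'a::ab_group_add \<Rightarrow> 'a" where
  "alt_sign i a = (if even i then a else - a)"

lemma sgn_sum_alt_sign: "sgn_sum m t = (\<Sum>i\<le>m. alt_sign i (t i))"
  by (simp add: sgn_sum_def alt_sign_def)

lemma alt_sign_zero [simp]: "alt_sign i 0 = 0"
  by (simp add: alt_sign_def)

lemma alt_sign_add: "alt_sign i (a + b) = alt_sign i a + alt_sign i b"
  by (simp add: alt_sign_def)

lemma alt_sign_uminus: "alt_sign i (- a) = - alt_sign i a"
  by (simp add: alt_sign_def)

lemma alt_sign_Suc: "alt_sign (Suc i) a = - alt_sign i a"
  by (simp add: alt_sign_def)

lemma alt_sign_sum: "alt_sign i (\<Sum>j\<in>J. f j) = (\<Sum>j\<in>J. alt_sign i (f j))"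
  by (simp add: alt_sign_def sum_negf)

lemma alt_sign_alt_sign: "alt_sign i (alt_sign j a) = alt_sign (i + j) a"
  by (simp add: alt_sign_def)

lemma sgn_sum_0 [simp]: "sgn_sum 0 t = t 0"
  by (simp add: sgn_sum_def)

lemma sgn_sum_Suc: "sgn_sum (Suc m) t = t 0 - sgn_sum m (\<lambda>i. t (Suc i))"
  unfolding sgn_sum_alt_sign sum.atMost_Suc_shift alt_sign_Suc sum_negf
  by (simp add: alt_sign_def)

lemma sgn_sum_add: "sgn_sum m (\<lambda>i. a i + b i) = sgn_sum m a + sgn_sum m b"
  unfolding sgn_sum_alt_sign by (simp add: alt_sign_add sum.distrib)

lemma sgn_sum_uminus: "sgn_sum m (\<lambda>i. - a i) = - sgn_sum m a"
  unfolding sgn_sum_alt_sign by (simp add: alt_sign_uminus sum_negf)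

lemma sgn_sum_zero [simp]: "sgn_sum m (\<lambda>i. 0) = 0"
  unfolding sgn_sum_alt_sign by simp

lemma sgn_sum_swap:
  "sgn_sum m (\<lambda>i. sgn_sum n (\<lambda>j. t i j)) = sgn_sum n (\<lambda>j. sgn_sum m (\<lambda>i. t i j))"
  unfolding sgn_sum_alt_sign alt_sign_sum alt_sign_alt_sign
  by (subst sum.swap) (simp add: add.commute)

lemma omit_omit:
  assumes "j < i"
  shows "omit N j (omit (Suc N) i x) = omit N (i - 1) (omit (Suc N) j x)"
  using assms unfolding omit_def by (auto simp: fun_eq_iff)

text \<open>The simplicial identity behind d \<circ> d = 0: the pairs (i, j) with j < i and with i \<le> j
  cancel each other via (i, j) \<mapsto> (j, i - 1).\<close>

lemma sgn_sum_omit_omit: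
  "sgn_sum (Suc N) (\<lambda>i. sgn_sum N (\<lambda>j. f (omit N j (omit (Suc N) i x)))) = (0::'a::ab_group_add)"
proof -
  define g :: "nat \<times> nat \<Rightarrow> 'a" where "g = (\<lambda>(i, j). alt_sign (i + j) (f (omit N j (omit (Suc N) i x))))"
  define I where "I = {..Suc N} \<times> {..N}"
  define S :: "(nat \<times> nat) set" where "S = {z. snd z < fst z}"
  have "sgn_sum (Suc N) (\<lambda>i. sgn_sum N (\<lambda>j. f (omit N j (omit (Suc N) i x)))) = sum g I"
    unfolding sgn_sum_alt_sign alt_sign_sum alt_sign_alt_sign g_def I_def sum.cartesian_product
    by simp
  also have "\<dots> = sum g (I \<inter> S) + sum g (I - S)"
    by (rule sum.Int_Diff) (simp add: I_def)
  also have "sum g (I - S) = (\<Sum>z\<in>I \<inter> S. - g z)"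
  proof (rule sum.reindex_bij_witness[where i = "\<lambda>(i, j). (j, i - 1)" and j = "\<lambda>(a, b). (Suc b, a)"])
    fix z assume "z \<in> I - S"
    then obtain a b where z: "z = (a, b)" "a \<le> b" "b \<le> N"
      by (auto simp: I_def S_def)
    have "omit N a (omit (Suc N) (Suc b) x) = omit N b (omit (Suc N) a x)"
      using omit_omit[of a "Suc b" N x] z by simp
    then show "- g (case z of (a, b) \<Rightarrow> (Suc b, a)) = g z"
      using z by (simp add: g_def alt_sign_def)
  qed (auto simp: I_def S_def)
  finally show ?thesis
    by (simp add: sum_negf)
qed

type_synonym 'g tuple = "nat \<Rightarrow> 'g"

definition tuple_cons :: "'g \<Rightarrow> 'g tuple \<Rightarrow> 'g tuple" where
  "tuple_cons a x = (\<lambda>j. case j of 0 \<Rightarrow> a | Suc k \<Rightarrow> x k)"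

definition tuple_single :: "'g \<Rightarrow> 'g tuple" where
  "tuple_single a = tuple_cons a (\<lambda>_. undefined)"

lemma mem_tuples: "x \<in> tuples G n \<longleftrightarrow> (\<forall>j\<le>n. x j \<in> carrier G) \<and> (\<forall>j>n. x j = undefined)"
  unfolding tuples_def PiE_def extensional_def Pi_def by auto

lemma tuples_carrier: "x \<in> tuples G n \<Longrightarrow> j \<le> n \<Longrightarrow> x j \<in> carrier G"
  unfolding mem_tuples by auto

lemma tuple_cons_tuples: "x \<in> tuples G p \<Longrightarrow> a \<in> carrier G \<Longrightarrow> tuple_cons a x \<in> tuples G (Suc p)"
  unfolding mem_tuples tuple_cons_def by (auto split: nat.split)

lemma tuple_single_tuples: "a \<in> carrier G \<Longrightarrow> tuple_single a \<in> tuples G 0"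
  unfolding mem_tuples tuple_single_def tuple_cons_def by (auto split: nat.split)

lemma omit_tuples: "x \<in> tuples G (Suc n) \<Longrightarrow> omit (Suc n) i x \<in> tuples G n"
  unfolding mem_tuples omit_def by auto

lemma ltrans_tuples:
  "group G \<Longrightarrow> g \<in> carrier G \<Longrightarrow> x \<in> tuples G n \<Longrightarrow> ltrans G n g x \<in> tuples G n"
  unfolding mem_tuples ltrans_def by (auto intro: group.is_monoid monoid.m_closed)

lemma omit_less: "k < n \<Longrightarrow> omit n i x k = x (if k < i then k else Suc k)"
  by (simp add: omit_def)

lemma omit_tuple_cons_0: "x \<in> tuples G n \<Longrightarrow> omit (Suc n) 0 (tuple_cons a x) = x"
  unfolding mem_tuples omit_def tuple_cons_def by (auto simp: fun_eq_iff not_less)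

lemma omit_tuple_cons_Suc: "omit (Suc n) (Suc i) (tuple_cons a x) = tuple_cons a (omit n i x)"
  unfolding omit_def tuple_cons_def by (auto simp: fun_eq_iff split: nat.split)

lemma omit_Suc_0_tuple_cons: "omit (Suc 0) (Suc 0) (tuple_cons a x) = tuple_single a"
  unfolding omit_def tuple_single_def tuple_cons_def by (auto simp: fun_eq_iff split: nat.split)

lemma omit_ltrans: "omit (Suc n) i (ltrans G (Suc n) g x) = ltrans G n g (omit (Suc n) i x)"
  unfolding omit_def ltrans_def by (auto simp: fun_eq_iff)

lemma ltrans_tuple_cons:
  "ltrans G (Suc p) g (tuple_cons a x) = tuple_cons (g \<otimes>\<^bsub>G\<^esub> a) (ltrans G p g x)"
  unfolding tuple_cons_def ltrans_def by (auto simp: fun_eq_iff split: nat.split)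

lemma ltrans_tuple_single: "ltrans G 0 g (tuple_single a) = tuple_single (g \<otimes>\<^bsub>G\<^esub> a)"
  unfolding tuple_single_def tuple_cons_def ltrans_def by (auto simp: fun_eq_iff split: nat.split)

lemma ltrans_0: "ltrans G q g y 0 = g \<otimes>\<^bsub>G\<^esub> y 0"
  unfolding ltrans_def by simp

lemma Gamma_subset_tuples: "Gamma G U q \<subseteq> tuples G q"
  unfolding Gamma_def by auto

lemma Gamma_mono: "U' \<subseteq> U \<Longrightarrow> Gamma G U' q \<subseteq> Gamma G U q"
  unfolding Gamma_def by auto

lemma Gamma_carrier: "group G \<Longrightarrow> Gamma G (carrier G) q = tuples G q"
  unfolding Gamma_def by (auto intro: tuples_carrier group.inv_closed monoid.m_closed group.is_monoid)

lemma omit_Gamma: "y \<in> Gamma G U (Suc q) \<Longrightarrow> omit (Suc q) i y \<in> Gamma G U q"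
  using omit_tuples[of y G q i] unfolding Gamma_def by (auto simp: omit_less)

lemma d_h_add: "d_h G p q (F + F') = d_h G p q F + d_h G p q F'"
  by (simp add: fun_eq_iff d_h_def sgn_sum_add)

lemma d_h_uminus: "d_h G p q (- F) = - d_h G p q F"
  by (simp add: fun_eq_iff d_h_def sgn_sum_uminus)

lemma d_h_zero [simp]: "d_h G p q 0 = 0"
  by (simp add: fun_eq_iff d_h_def)

lemma d_v_add: "d_v G p q (F + F') = d_v G p q F + d_v G p q F'"
  by (simp add: fun_eq_iff d_v_def sgn_sum_add)

lemma d_v_uminus: "d_v G p q (- F) = - d_v G p q F"
  by (simp add: fun_eq_iff d_v_def sgn_sum_uminus)

lemma d_v_zero [simp]: "d_v G p q 0 = 0"
  by (simp add: fun_eq_iff d_v_def)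

lemma d_h_d_h: "d_h G (Suc p) q (d_h G p q F) = 0"
  using sgn_sum_omit_omit[of "Suc p" "\<lambda>z. F z _"]
  by (auto simp: fun_eq_iff d_h_def omit_tuples)

lemma d_v_d_v: "d_v G p (Suc q) (d_v G p q F) = 0"
  using sgn_sum_omit_omit[of "Suc q" "\<lambda>z. F _ z"]
  by (auto simp: fun_eq_iff d_v_def omit_tuples sgn_sum_uminus)

lemma d_h_d_v: "d_h G p (Suc q) (d_v G p q F) + d_v G (Suc p) q (d_h G p q F) = 0"
  using sgn_sum_swap[of "Suc p" "Suc q" "\<lambda>i j. F (omit (Suc p) i _) (omit (Suc q) j _)"]
  by (auto simp: fun_eq_iff d_v_def d_h_def omit_tuples sgn_sum_uminus)

lemma d_Tot_add: "d_Tot G n (E + E') = d_Tot G n E + d_Tot G n E'"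
  by (simp add: fun_eq_iff d_Tot_def d_h_add d_v_add)

lemma d_Tot_uminus: "d_Tot G n (- E) = - d_Tot G n E"
  by (simp add: fun_eq_iff d_Tot_def d_h_uminus d_v_uminus)

lemma d_Tot_diff: "d_Tot G n (E - E') = d_Tot G n E - d_Tot G n E'"
  unfolding diff_conv_add_uminus d_Tot_add d_Tot_uminus ..

lemma d_Tot_zero [simp]: "d_Tot G n 0 = 0"
  by (simp add: fun_eq_iff d_Tot_def)

lemma d_Tot_d_Tot: "d_Tot G (Suc n) (d_Tot G n E) = 0"
proof (rule ext)
  fix p
  consider "p = 0" | P where "p = Suc P" "P \<le> n" | "p = Suc (Suc n)" | "p > Suc (Suc n)"
    by (cases p) (auto, arith)
  then show "d_Tot G (Suc n) (d_Tot G n E) p = 0 p"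
  proof cases
    case 2
    have outer: "d_Tot G (Suc n) (d_Tot G n E) p
        = d_h G P (Suc (n - P)) (d_Tot G n E P) + d_v G (Suc P) (n - P) (d_Tot G n E (Suc P))"
      using 2 by (simp add: d_Tot_def Suc_diff_le)
    have col: "d_Tot G n E P = (if 0 < P then d_h G (P - 1) (n - (P - 1)) (E (P - 1)) else 0)
        + d_v G P (n - P) (E P)"
      using 2 by (simp add: d_Tot_def)
    have next_col: "d_Tot G n E (Suc P) = d_h G P (n - P) (E P)
        + (if Suc P \<le> n then d_v G (Suc P) (n - Suc P) (E (Suc P)) else 0)"
      using 2 by (simp add: d_Tot_def)
    have hh: "d_h G P (Suc (n - P)) (if 0 < P then d_h G (P - 1) (n - (P - 1)) (E (P - 1)) else 0) = 0"
      using d_h_d_h[of G "P - 1" "n - (P - 1)"] \<open>P \<le> n\<close> by (cases P) (simp_all add: Suc_diff_Suc)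
    have vv: "d_v G (Suc P) (n - P) (if Suc P \<le> n then d_v G (Suc P) (n - Suc P) (E (Suc P)) else 0) = 0"
      using d_v_d_v[of G "Suc P" "n - Suc P"] by (cases "Suc P \<le> n") (simp_all add: Suc_diff_Suc)
    have hv: "d_h G P (Suc (n - P)) (d_v G P (n - P) (E P)) + d_v G (Suc P) (n - P) (d_h G P (n - P) (E P)) = 0"
      using d_h_d_v[of G P "n - P" "E P"] by simp
    show ?thesis
      unfolding outer col next_col d_h_add d_v_add using hh vv hv by (simp add: algebra_simps)
  qed (simp_all add: d_Tot_def d_h_d_h d_v_d_v)
qed

definition pullback ::
  "('g, 'b) monoid_scheme \<Rightarrow> nat \<Rightarrow> nat \<Rightarrow> ('g tuple \<times> 'g tuple \<Rightarrow> 'g tuple \<times> 'g tuple)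
   \<Rightarrow> ('g tuple \<Rightarrow> 'g tuple \<Rightarrow> 'a::zero) \<Rightarrow> ('g tuple \<Rightarrow> 'g tuple \<Rightarrow> 'a)" where
  "pullback G p q \<phi> F = (\<lambda>x y. if x \<in> tuples G p \<and> y \<in> tuples G q then case_prod F (\<phi> (x, y)) else 0)"

lemma d_h_eq_pullbacks:
  "d_h G p q F = (\<lambda>x y. sgn_sum (Suc p) (\<lambda>i. pullback G (Suc p) q (\<lambda>(x, y). (omit (Suc p) i x, y)) F x y))"
  by (intro ext) (auto simp: d_h_def pullback_def)

lemma d_v_eq_pullbacks:
  "d_v G p q F = (if even p then id else uminus)
     (\<lambda>x y. sgn_sum (Suc q) (\<lambda>i. pullback G p (Suc q) (\<lambda>(x, y). (x, omit (Suc q) i y)) F x y))"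
  by (intro ext) (auto simp: d_v_def pullback_def)

section \<open>Contracting the rows\<close>

definition row_contraction ::
  "('g, 'b) monoid_scheme \<Rightarrow> nat \<Rightarrow> nat
   \<Rightarrow> ('g tuple \<Rightarrow> 'g tuple \<Rightarrow> 'a::zero) \<Rightarrow> ('g tuple \<Rightarrow> 'g tuple \<Rightarrow> 'a)" where
  "row_contraction G p q = pullback G p q (\<lambda>(x, y). (tuple_cons (y 0) x, y))"

text \<open>The row contraction out of column 0, onto C_{lc,k}.\<close>

definition augmentation_retract ::
  "('g, 'b) monoid_scheme \<Rightarrow> nat \<Rightarrow> ('g tuple \<Rightarrow> 'g tuple \<Rightarrow> 'a::zero) \<Rightarrow> ('g tuple \<Rightarrow> 'a)" where
  "augmentation_retract G q F = (\<lambda>y. if y \<in> tuples G q then F (tuple_single (y 0)) y else 0)"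

lemma d_h_row_contraction:
  assumes supp: "\<And>x y. \<not> (x \<in> tuples G (Suc p) \<and> y \<in> tuples G q) \<Longrightarrow> F x y = 0"
    and closed: "d_h G (Suc p) q F = 0"
  shows "d_h G p q (row_contraction G p q F) = F"
proof (intro ext)
  fix x y
  show "d_h G p q (row_contraction G p q F) x y = F x y"
  proof (cases "x \<in> tuples G (Suc p) \<and> y \<in> tuples G q")
    case True
    then have x: "x \<in> tuples G (Suc p)" and "tuple_cons (y 0) x \<in> tuples G (Suc (Suc p))"
      by (auto intro!: tuple_cons_tuples tuples_carrier)
    then have "0 = F x y - sgn_sum (Suc p) (\<lambda>i. F (tuple_cons (y 0) (omit (Suc p) i x)) y)"
      using fun_cong[OF fun_cong[OF closed, of "tuple_cons (y 0) x"], of y] True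
      by (simp add: d_h_def sgn_sum_Suc omit_tuple_cons_0[OF x] omit_tuple_cons_Suc)
    then show ?thesis
      using True by (simp add: d_h_def row_contraction_def pullback_def omit_tuples)
  qed (auto simp: supp d_h_def)
qed

lemma j_hk_augmentation_retract:
  assumes supp: "\<And>x y. \<not> (x \<in> tuples G 0 \<and> y \<in> tuples G q) \<Longrightarrow> F x y = 0"
    and closed: "d_h G 0 q F = 0"
  shows "j_hk G q (augmentation_retract G q F) 0 = F"
proof (intro ext)
  fix x y
  show "j_hk G q (augmentation_retract G q F) 0 x y = F x y"
  proof (cases "x \<in> tuples G 0 \<and> y \<in> tuples G q")
    case True
    then have x: "x \<in> tuples G 0" and "tuple_cons (y 0) x \<in> tuples G (Suc 0)"
      by (auto intro!: tuple_cons_tuples tuples_carrier)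
    then have "0 = F x y - F (tuple_single (y 0)) y"
      using fun_cong[OF fun_cong[OF closed, of "tuple_cons (y 0) x"], of y] True
      by (simp add: d_h_def sgn_sum_Suc omit_tuple_cons_0[OF x] omit_Suc_0_tuple_cons)
    then show ?thesis
      using True by (simp add: j_hk_def augmentation_retract_def)
  qed (auto simp: supp j_hk_def)
qed

lemma j_hk_nonzero: "p \<noteq> 0 \<Longrightarrow> j_hk G n c p = 0"
  by (simp add: fun_eq_iff j_hk_def)

lemma j_hk_zero [simp]: "j_hk G n 0 = 0"
  by (simp add: fun_eq_iff j_hk_def)

lemma d_h_j_hk: "d_h G 0 q (j_hk G q c 0) = 0"
  by (auto simp: fun_eq_iff d_h_def j_hk_def sgn_sum_Suc omit_tuples)

lemma d_v_j_hk: "d_v G 0 q (j_hk G q c 0) = j_hk G (Suc q) (d_C G q c) 0"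
  by (auto simp: fun_eq_iff d_v_def j_hk_def d_C_def omit_tuples)

lemma d_Tot_j_hk: "d_Tot G n (j_hk G n c) = j_hk G (Suc n) (d_C G n c)"
proof (rule ext)
  fix p :: nat
  consider "p = 0" | "p = 1" | "p > 1"
    by arith
  then show "d_Tot G n (j_hk G n c) p = j_hk G (Suc n) (d_C G n c) p"
    by cases (simp_all add: d_Tot_def d_h_j_hk d_v_j_hk j_hk_nonzero)
qed

lemma j_hk_inject:
  assumes "carrier G \<noteq> {}"
    and "\<And>y. y \<notin> tuples G n \<Longrightarrow> c y = 0" "\<And>y. y \<notin> tuples G n \<Longrightarrow> c' y = 0"
    and "j_hk G n c = j_hk G n c'"
  shows "c = c'"
proof
  fix y
  obtain a where "a \<in> carrier G"
    using assms(1) by blast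
  then show "c y = c' y"
    using fun_cong[OF fun_cong[OF fun_cong[OF assms(4), of 0], of "tuple_single a"], of y] assms(2,3)
    by (cases "y \<in> tuples G n") (auto simp: j_hk_def tuple_single_tuples)
qed

definition Gamma_prod_top ::
  "('g, 'b) monoid_scheme \<Rightarrow> 'g topology \<Rightarrow> 'g set \<Rightarrow> nat \<Rightarrow> nat \<Rightarrow> ('g tuple \<times> 'g tuple) topology" where
  "Gamma_prod_top G T U p q = prod_topology (tuple_top T p) (subtopology (tuple_top T q) (Gamma G U q))"

locale k_group_module =
  fixes G :: "('g, 'b) monoid_scheme" and T :: "'g topology"
    and TA :: "('a::ab_group_add) topology" and act :: "'g \<Rightarrow> 'a \<Rightarrow> 'a"
  assumes k_group: "k_group G T" and module: "cont_G_module G T TA act"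
begin

lemma group: "group G"
  using k_group by (simp add: k_group_def)

lemma topspace_T: "topspace T = carrier G"
  using k_group by (simp add: k_group_def)

lemma topspace_TA [simp]: "topspace TA = UNIV"
  using module by (simp add: cont_G_module_def ab_top_group_def)

lemma act_add: "g \<in> carrier G \<Longrightarrow> act g (a + b) = act g a + act g b"
  using module by (simp add: cont_G_module_def)

lemma act_zero: "g \<in> carrier G \<Longrightarrow> act g 0 = 0"
  using act_add[of g 0 0] by simp

lemma act_uminus: "g \<in> carrier G \<Longrightarrow> act g (- a) = - act g a"
  using act_add[of g a "- a"] act_zero[of g] by (simp add: eq_neg_iff_add_eq_0 add.commute)

lemma continuous_map_add:
  assumes "continuous_map X TA f" "continuous_map X TA g"
  shows "continuous_map X TA (\<lambda>x. f x + g x)"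
proof -
  have "continuous_map (prod_topology TA TA) TA (\<lambda>(a, b). a + b)"
    using module by (simp add: cont_G_module_def ab_top_group_def)
  from continuous_map_compose[OF continuous_map_pairedI[OF assms] this]
  show ?thesis by (simp add: o_def)
qed

lemma continuous_map_uminus:
  assumes "continuous_map X TA f"
  shows "continuous_map X TA (\<lambda>x. - f x)"
proof -
  have "continuous_map TA TA uminus"
    using module by (simp add: cont_G_module_def ab_top_group_def)
  from continuous_map_compose[OF assms this]
  show ?thesis by (simp add: o_def)
qed

lemma topspace_tuple_top [simp]: "topspace (tuple_top T n) = tuples G n"
  by (simp add: tuple_top_def tuples_def topspace_T)

lemma topspace_Gamma_prod_top [simp]: "topspace (Gamma_prod_top G T U p q) = tuples G p \<times> Gamma G U q"
  using Gamma_subset_tuples[of G U q] by (auto simp: Gamma_prod_top_def)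

lemma continuous_map_fst_component:
  "k \<le> p \<Longrightarrow> continuous_map (Gamma_prod_top G T U p q) T (\<lambda>z. fst z k)"
  using continuous_map_compose[OF continuous_map_fst continuous_map_product_projection[of k "{..p}" "\<lambda>_. T"]]
  by (simp add: Gamma_prod_top_def tuple_top_def o_def)

lemma continuous_map_snd_component:
  "k \<le> q \<Longrightarrow> continuous_map (Gamma_prod_top G T U p q) T (\<lambda>z. snd z k)"
  using continuous_map_compose[OF continuous_map_snd
      continuous_map_from_subtopology[OF continuous_map_product_projection[of k "{..q}" "\<lambda>_. T"]]]
  by (simp add: Gamma_prod_top_def tuple_top_def o_def)

lemma continuous_map_into_tuple_top:
  assumes "\<And>z. z \<in> topspace X \<Longrightarrow> h z \<in> tuples G n"
    and "\<And>k. k \<le> n \<Longrightarrow> continuous_map X T (\<lambda>z. h z k)"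
  shows "continuous_map X (tuple_top T n) h"
  unfolding tuple_top_def continuous_map_componentwise
  using assms by (auto simp: tuples_def PiE_def)

lemma continuous_map_into_Gamma_prod_top:
  assumes "continuous_map X (tuple_top T p) h1" "continuous_map X (tuple_top T q) h2"
    and "\<And>z. z \<in> topspace X \<Longrightarrow> h2 z \<in> Gamma G U q"
  shows "continuous_map X (Gamma_prod_top G T U p q) (\<lambda>z. (h1 z, h2 z))"
  unfolding Gamma_prod_top_def
  using assms by (intro continuous_map_pairedI continuous_map_into_subtopology) auto

lemma continuous_map_snd_tuple_top: "continuous_map (Gamma_prod_top G T U p q) (tuple_top T q) snd"
  unfolding Gamma_prod_top_def using continuous_map_snd continuous_map_into_fulltopology by blast

lemma continuous_map_tuple_cons_fst:
  "continuous_map (Gamma_prod_top G T U p q) (Gamma_prod_top G T U (Suc p) q) (\<lambda>(x, y). (tuple_cons (y 0) x, y))"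
  unfolding case_prod_beta'
proof (intro continuous_map_into_Gamma_prod_top continuous_map_snd_tuple_top continuous_map_into_tuple_top)
  fix k assume "k \<le> Suc p"
  then show "continuous_map (Gamma_prod_top G T U p q) T (\<lambda>z. tuple_cons (snd z 0) (fst z) k)"
    using continuous_map_snd_component[of 0] continuous_map_fst_component[of "k - 1" p]
    by (cases k) (simp_all add: tuple_cons_def)
qed (auto intro!: tuple_cons_tuples tuples_carrier dest: subsetD[OF Gamma_subset_tuples])

lemma continuous_map_omit_fst:
  "continuous_map (Gamma_prod_top G T U (Suc p) q) (Gamma_prod_top G T U p q) (\<lambda>(x, y). (omit (Suc p) i x, y))"
  unfolding case_prod_beta'
proof (intro continuous_map_into_Gamma_prod_top continuous_map_snd_tuple_top continuous_map_into_tuple_top)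
  fix k assume "k \<le> p"
  then show "continuous_map (Gamma_prod_top G T U (Suc p) q) T (\<lambda>z. omit (Suc p) i (fst z) k)"
    using continuous_map_fst_component[of "if k < i then k else Suc k" "Suc p"] by (simp add: omit_less)
qed (auto intro: omit_tuples)

lemma continuous_map_omit_snd:
  "continuous_map (Gamma_prod_top G T U p (Suc q)) (Gamma_prod_top G T U p q) (\<lambda>(x, y). (x, omit (Suc q) i y))"
  unfolding case_prod_beta'
proof (rule continuous_map_into_Gamma_prod_top)
  show "continuous_map (Gamma_prod_top G T U p (Suc q)) (tuple_top T p) fst"
    unfolding Gamma_prod_top_def by (rule continuous_map_fst)
  show "continuous_map (Gamma_prod_top G T U p (Suc q)) (tuple_top T q) (\<lambda>z. omit (Suc q) i (snd z))"
  proof (rule continuous_map_into_tuple_top)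
    fix k assume "k \<le> q"
    then show "continuous_map (Gamma_prod_top G T U p (Suc q)) T (\<lambda>z. omit (Suc q) i (snd z) k)"
      using continuous_map_snd_component[of "if k < i then k else Suc k" "Suc q"] by (simp add: omit_less)
  qed (auto intro!: omit_tuples intro: subsetD[OF Gamma_subset_tuples])
qed (auto intro: omit_Gamma)

lemma continuous_map_tuple_single_Gamma:
  "continuous_map (subtopology (tuple_top T q) (Gamma G U q)) (Gamma_prod_top G T U 0 q) (\<lambda>y. (tuple_single (y 0), y))"
proof (rule continuous_map_into_Gamma_prod_top)
  show "continuous_map (subtopology (tuple_top T q) (Gamma G U q)) (tuple_top T 0) (\<lambda>y. tuple_single (y 0))"
  proof (rule continuous_map_into_tuple_top)
    show "continuous_map (subtopology (tuple_top T q) (Gamma G U q)) T (\<lambda>y. tuple_single (y 0) k)"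
      if "k \<le> 0" for k
      using that continuous_map_from_subtopology[OF continuous_map_product_projection[of 0 "{..q}" "\<lambda>_. T"]]
      by (simp add: tuple_top_def tuple_single_def tuple_cons_def)
  qed (auto intro!: tuple_single_tuples tuples_carrier dest: subsetD[OF Gamma_subset_tuples])
qed (auto simp: continuous_map_from_subtopology)

lemma continuous_map_Gamma_prod_top_mono:
  assumes "U' \<subseteq> U" and "continuous_map (kify (Gamma_prod_top G T U p q)) TA f"
  shows "continuous_map (kify (Gamma_prod_top G T U' p q)) TA f"
proof -
  have "continuous_map (Gamma_prod_top G T U' p q) (Gamma_prod_top G T U p q) (\<lambda>z. (fst z, snd z))"
    using Gamma_mono[OF assms(1), of G q]
    by (intro continuous_map_into_Gamma_prod_top)
      (auto simp: Gamma_prod_top_def continuous_map_fst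
            intro: continuous_map_into_fulltopology[OF continuous_map_snd])
  from continuous_map_compose[OF continuous_map_kify[OF this] assms(2)] show ?thesis
    by (simp add: o_def)
qed

end

context k_group_module
begin

lemma identity_nbhd_carrier: "identity_nbhd G T (carrier G)"
  using group topspace_T unfolding identity_nbhd_def by (metis group.is_monoid monoid.one_closed openin_topspace order_refl)

lemma identity_nbhd_Int: "identity_nbhd G T U1 \<Longrightarrow> identity_nbhd G T U2 \<Longrightarrow> identity_nbhd G T (U1 \<inter> U2)"
  unfolding identity_nbhd_def by (metis Int_mono le_infI1 openin_Int IntI)

lemma A_lck_fixed_iff: "F \<in> A_lck_fixed G T TA act p q \<longleftrightarrow>
   (\<forall>x y. \<not> (x \<in> tuples G p \<and> y \<in> tuples G q) \<longrightarrow> F x y = 0) \<and>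
   (\<exists>U. identity_nbhd G T U \<and> continuous_map (kify (Gamma_prod_top G T U p q)) TA (\<lambda>(x, y). F x y)) \<and>
   (\<forall>g\<in>carrier G. \<forall>x\<in>tuples G p. \<forall>y\<in>tuples G q.
        act g (F (ltrans G p (inv\<^bsub>G\<^esub> g) x) (ltrans G q (inv\<^bsub>G\<^esub> g) y)) = F x y)"
  unfolding A_lck_fixed_def A_lck_def Gamma_prod_top_def kprod_def[symmetric] kprod_kify by blast

lemma A_lck_fixed_zero: "0 \<in> A_lck_fixed G T TA act p q"
  using identity_nbhd_carrier by (auto simp: A_lck_fixed_iff act_zero case_prod_beta')

lemma A_lck_fixed_add:
  assumes F: "F \<in> A_lck_fixed G T TA act p q" and F': "F' \<in> A_lck_fixed G T TA act p q"
  shows "F + F' \<in> A_lck_fixed G T TA act p q"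
proof -
  obtain U where U: "identity_nbhd G T U"
    and Fc: "continuous_map (kify (Gamma_prod_top G T U p q)) TA (\<lambda>(x, y). F x y)"
    using F unfolding A_lck_fixed_iff by blast
  obtain U' where U': "identity_nbhd G T U'"
    and F'c: "continuous_map (kify (Gamma_prod_top G T U' p q)) TA (\<lambda>(x, y). F' x y)"
    using F' unfolding A_lck_fixed_iff by blast
  have "continuous_map (kify (Gamma_prod_top G T (U \<inter> U') p q)) TA (\<lambda>z. (\<lambda>(x, y). F x y) z + (\<lambda>(x, y). F' x y) z)"
    using continuous_map_Gamma_prod_top_mono[OF _ Fc] continuous_map_Gamma_prod_top_mono[OF _ F'c]
    by (intro continuous_map_add) auto
  then show ?thesis
    using F F' identity_nbhd_Int[OF U U'] unfolding A_lck_fixed_iff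
    by (auto simp: act_add case_prod_beta')
qed

lemma A_lck_fixed_uminus:
  assumes F: "F \<in> A_lck_fixed G T TA act p q"
  shows "- F \<in> A_lck_fixed G T TA act p q"
proof -
  obtain U where U: "identity_nbhd G T U"
    and Fc: "continuous_map (kify (Gamma_prod_top G T U p q)) TA (\<lambda>(x, y). F x y)"
    using F unfolding A_lck_fixed_iff by blast
  show ?thesis
    using F U continuous_map_uminus[OF Fc] unfolding A_lck_fixed_iff
    by (auto simp: act_uminus case_prod_beta')
qed

lemma A_lck_fixed_diff:
  "F \<in> A_lck_fixed G T TA act p q \<Longrightarrow> F' \<in> A_lck_fixed G T TA act p q \<Longrightarrow> F - F' \<in> A_lck_fixed G T TA act p q"
  unfolding diff_conv_add_uminus by (intro A_lck_fixed_add A_lck_fixed_uminus)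

lemma A_lck_fixed_sgn_sum:
  assumes "\<And>i. t i \<in> A_lck_fixed G T TA act p q"
  shows "(\<lambda>x y. sgn_sum m (\<lambda>i. t i x y)) \<in> A_lck_fixed G T TA act p q"
  using assms
proof (induction m arbitrary: t)
  case (Suc m)
  have "(\<lambda>x y. sgn_sum (Suc m) (\<lambda>i. t i x y)) = t 0 - (\<lambda>x y. sgn_sum m (\<lambda>i. t (Suc i) x y))"
    by (simp add: fun_eq_iff sgn_sum_Suc)
  then show ?case
    using Suc.IH[of "\<lambda>i. t (Suc i)"] Suc.prems by (simp add: A_lck_fixed_diff)
qed simp

lemma A_lck_fixed_pullback:
  assumes F: "F \<in> A_lck_fixed G T TA act p q"
    and cont: "\<And>U. continuous_map (Gamma_prod_top G T U p' q') (Gamma_prod_top G T U p q) \<phi>"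
    and equivariant: "\<And>g x y. g \<in> carrier G \<Longrightarrow> x \<in> tuples G p' \<Longrightarrow> y \<in> tuples G q' \<Longrightarrow>
        \<phi> (ltrans G p' g x, ltrans G q' g y) = map_prod (ltrans G p g) (ltrans G q g) (\<phi> (x, y))"
  shows "pullback G p' q' \<phi> F \<in> A_lck_fixed G T TA act p' q'"
proof -
  obtain U where U: "identity_nbhd G T U"
    and Fc: "continuous_map (kify (Gamma_prod_top G T U p q)) TA (\<lambda>(x, y). F x y)"
    using F unfolding A_lck_fixed_iff by blast
  have "continuous_map (kify (Gamma_prod_top G T U p' q')) TA ((\<lambda>(x, y). F x y) \<circ> \<phi>)"
    using continuous_map_compose[OF continuous_map_kify[OF cont] Fc] .
  then have cont_pullback: "continuous_map (kify (Gamma_prod_top G T U p' q')) TA (\<lambda>(x, y). pullback G p' q' \<phi> F x y)"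
    by (rule continuous_map_eq) (auto simp: pullback_def dest: subsetD[OF Gamma_subset_tuples])
  have \<phi>_tuples: "\<phi> (x, y) \<in> tuples G p \<times> tuples G q" if "x \<in> tuples G p'" "y \<in> tuples G q'" for x y
    using continuous_map_image_subset_topspace[OF cont[of "carrier G"]] that
    by (auto simp: Gamma_carrier[OF group])
  have "act g (pullback G p' q' \<phi> F (ltrans G p' (inv\<^bsub>G\<^esub> g) x) (ltrans G q' (inv\<^bsub>G\<^esub> g) y))
      = pullback G p' q' \<phi> F x y"
    if g: "g \<in> carrier G" and x: "x \<in> tuples G p'" and y: "y \<in> tuples G q'" for g x y
  proof -
    have g': "inv\<^bsub>G\<^esub> g \<in> carrier G"
      using g group by (simp add: group.inv_closed)
    obtain x' y' where "\<phi> (x, y) = (x', y')" "x' \<in> tuples G p" "y' \<in> tuples G q"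
      using \<phi>_tuples[OF x y] by auto
    then show ?thesis
      using F g x y equivariant[OF g' x y] ltrans_tuples[OF group g'] unfolding A_lck_fixed_iff
      by (simp add: pullback_def)
  qed
  then show ?thesis
    using U cont_pullback unfolding A_lck_fixed_iff by (auto simp: pullback_def)
qed

lemma A_lck_fixed_row_contraction:
  "F \<in> A_lck_fixed G T TA act (Suc p) q \<Longrightarrow> row_contraction G p q F \<in> A_lck_fixed G T TA act p q"
  unfolding row_contraction_def
  by (erule A_lck_fixed_pullback) (simp_all add: continuous_map_tuple_cons_fst ltrans_0 ltrans_tuple_cons)

lemma A_lck_fixed_d_h:
  "F \<in> A_lck_fixed G T TA act p q \<Longrightarrow> d_h G p q F \<in> A_lck_fixed G T TA act (Suc p) q"
  unfolding d_h_eq_pullbacks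
  by (intro A_lck_fixed_sgn_sum, erule A_lck_fixed_pullback) (simp_all add: continuous_map_omit_fst omit_ltrans)

lemma A_lck_fixed_d_v:
  assumes "F \<in> A_lck_fixed G T TA act p q"
  shows "d_v G p q F \<in> A_lck_fixed G T TA act p (Suc q)"
proof -
  have "(\<lambda>x y. sgn_sum (Suc q) (\<lambda>i. pullback G p (Suc q) (\<lambda>(x, y). (x, omit (Suc q) i y)) F x y))
      \<in> A_lck_fixed G T TA act p (Suc q)"
    by (intro A_lck_fixed_sgn_sum A_lck_fixed_pullback[OF assms])
      (simp_all add: continuous_map_omit_snd omit_ltrans)
  then show ?thesis
    unfolding d_v_eq_pullbacks by (simp add: A_lck_fixed_uminus)
qed

lemma C_lck_augmentation_retract:
  assumes F: "F \<in> A_lck_fixed G T TA act 0 q"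
  shows "augmentation_retract G q F \<in> C_lck G T TA act q"
proof -
  obtain U where U: "identity_nbhd G T U"
    and Fc: "continuous_map (kify (Gamma_prod_top G T U 0 q)) TA (\<lambda>(x, y). F x y)"
    using F unfolding A_lck_fixed_iff by blast
  have "continuous_map (kify (subtopology (tuple_top T q) (Gamma G U q))) TA ((\<lambda>(x, y). F x y) \<circ> (\<lambda>y. (tuple_single (y 0), y)))"
    using continuous_map_compose[OF continuous_map_kify[OF continuous_map_tuple_single_Gamma] Fc] .
  then have "continuous_map (kify (subtopology (tuple_top T q) (Gamma G U q))) TA (augmentation_retract G q F)"
    by (rule continuous_map_eq) (auto simp: augmentation_retract_def dest: subsetD[OF Gamma_subset_tuples])
  moreover have "act g (augmentation_retract G q F (ltrans G q (inv\<^bsub>G\<^esub> g) y)) = augmentation_retract G q F y"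
    if g: "g \<in> carrier G" and y: "y \<in> tuples G q" for g y
  proof -
    have "ltrans G q (inv\<^bsub>G\<^esub> g) y \<in> tuples G q"
      using g y group by (simp add: group.inv_closed ltrans_tuples)
    then have "augmentation_retract G q F (ltrans G q (inv\<^bsub>G\<^esub> g) y)
        = F (ltrans G 0 (inv\<^bsub>G\<^esub> g) (tuple_single (y 0))) (ltrans G q (inv\<^bsub>G\<^esub> g) y)"
      by (simp add: augmentation_retract_def ltrans_0 ltrans_tuple_single)
    moreover have "tuple_single (y 0) \<in> tuples G 0"
      using y by (simp add: tuple_single_tuples tuples_carrier)
    ultimately show ?thesis
      using F g y unfolding A_lck_fixed_iff by (simp add: augmentation_retract_def)
  qed
  ultimately show ?thesis
    using U unfolding C_lck_def by (auto simp: augmentation_retract_def)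
qed

lemma A_lck_fixed_j_hk:
  assumes c: "c \<in> C_lck G T TA act q"
  shows "j_hk G q c 0 \<in> A_lck_fixed G T TA act 0 q"
proof -
  obtain U where U: "identity_nbhd G T U"
    and cc: "continuous_map (kify (subtopology (tuple_top T q) (Gamma G U q))) TA c"
    using c unfolding C_lck_def by blast
  have "continuous_map (kify (Gamma_prod_top G T U 0 q)) TA (c \<circ> snd)"
    using continuous_map_compose[OF continuous_map_kify[OF continuous_map_snd] cc]
    by (simp add: Gamma_prod_top_def)
  then have "continuous_map (kify (Gamma_prod_top G T U 0 q)) TA (\<lambda>(x, y). j_hk G q c 0 x y)"
    by (rule continuous_map_eq) (auto simp: j_hk_def dest: subsetD[OF Gamma_subset_tuples])
  then show ?thesis
    using U c group unfolding A_lck_fixed_iff C_lck_def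
    by (auto simp: j_hk_def ltrans_tuples group.inv_closed)
qed

end

section \<open>The staircase argument in the total complex\<close>

context k_group_module
begin

lemma Tot_zero: "0 \<in> Tot G T TA act n"
  by (simp add: Tot_def A_lck_fixed_zero)

lemma Tot_add: "E \<in> Tot G T TA act n \<Longrightarrow> E' \<in> Tot G T TA act n \<Longrightarrow> E + E' \<in> Tot G T TA act n"
  by (simp add: Tot_def A_lck_fixed_add)

lemma Tot_diff: "E \<in> Tot G T TA act n \<Longrightarrow> E' \<in> Tot G T TA act n \<Longrightarrow> E - E' \<in> Tot G T TA act n"
  by (simp add: Tot_def A_lck_fixed_diff)

lemma Tot_single_column:
  "k \<le> n \<Longrightarrow> e \<in> A_lck_fixed G T TA act k (n - k) \<Longrightarrow> (\<lambda>p. if p = k then e else 0) \<in> Tot G T TA act n"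
  by (simp add: Tot_def A_lck_fixed_zero)

lemma Tot_d_Tot:
  assumes E: "E \<in> Tot G T TA act n"
  shows "d_Tot G n E \<in> Tot G T TA act (Suc n)"
  unfolding Tot_def
proof (intro CollectI conjI allI impI)
  fix p assume p: "p \<le> Suc n"
  have "(if 0 < p then d_h G (p - 1) (n - (p - 1)) (E (p - 1)) else 0) \<in> A_lck_fixed G T TA act p (Suc n - p)"
    using E p by (cases p) (simp_all add: Tot_def A_lck_fixed_zero A_lck_fixed_d_h)
  moreover have "(if p \<le> n then d_v G p (n - p) (E p) else 0) \<in> A_lck_fixed G T TA act p (Suc n - p)"
    using E A_lck_fixed_d_v[of "E p" p "n - p"] by (simp add: Tot_def A_lck_fixed_zero Suc_diff_le)
  ultimately show "d_Tot G n E p \<in> A_lck_fixed G T TA act p (Suc n - p)"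
    using p by (simp add: d_Tot_def A_lck_fixed_add)
qed (simp add: d_Tot_def)

lemma Tot_j_hk:
  assumes "c \<in> C_lck G T TA act n"
  shows "j_hk G n c \<in> Tot G T TA act n"
proof -
  have "j_hk G n c p \<in> A_lck_fixed G T TA act p (n - p)" for p
    using assms by (cases "p = 0") (simp_all add: A_lck_fixed_j_hk A_lck_fixed_zero j_hk_nonzero)
  then show ?thesis
    by (simp add: Tot_def j_hk_nonzero)
qed

lemma j_hk_eq_imp_eq:
  "j_hk G n c = j_hk G n c' \<Longrightarrow> (\<And>y. y \<notin> tuples G n \<Longrightarrow> c y = 0)
    \<Longrightarrow> (\<And>y. y \<notin> tuples G n \<Longrightarrow> c' y = 0) \<Longrightarrow> c = c'"
  using monoid.one_closed[OF group.is_monoid[OF group]] by (intro j_hk_inject) auto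

lemma zero_in_coboundaries: "0 \<in> coboundaries (Tot G T TA act) (d_Tot G) n"
  unfolding coboundaries_def using Tot_zero by (auto intro!: image_eqI[of 0 _ 0])

lemma coboundaries_Tot:
  "B \<in> coboundaries (Tot G T TA act) (d_Tot G) n \<Longrightarrow> B \<in> Tot G T TA act n"
  by (cases n) (auto simp: coboundaries_def Tot_zero Tot_d_Tot)

lemma d_Tot_coboundary:
  "B \<in> coboundaries (Tot G T TA act) (d_Tot G) n \<Longrightarrow> d_Tot G n B = 0"
  by (cases n) (auto simp: coboundaries_def d_Tot_d_Tot)

lemma coboundaries_add_d_Tot:
  "B \<in> coboundaries (Tot G T TA act) (d_Tot G) (Suc m) \<Longrightarrow> E \<in> Tot G T TA act m
    \<Longrightarrow> B + d_Tot G m E \<in> coboundaries (Tot G T TA act) (d_Tot G) (Suc m)"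
  by (auto simp: coboundaries_def d_Tot_add[symmetric] Tot_add)

text \<open>One step of the staircase: the top column Suc k of E is d_h-closed, so by exactness of
  the rows it is d_h of its contraction, and subtracting d_Tot of that contraction clears it.\<close>

lemma Tot_clear_top_column:
  assumes E: "E \<in> Tot G T TA act (Suc m)" and top: "\<forall>p>Suc k. E p = 0" and "k \<le> m"
    and closed: "d_Tot G (Suc m) E (Suc (Suc k)) = 0"
  shows "\<exists>E'\<in>Tot G T TA act m. \<forall>p>k. (E - d_Tot G m E') p = 0"
proof -
  have "E (Suc k) \<in> A_lck_fixed G T TA act (Suc k) (Suc m - Suc k)"
    using E \<open>k \<le> m\<close> unfolding Tot_def by blast
  then have Ek: "E (Suc k) \<in> A_lck_fixed G T TA act (Suc k) (m - k)"
    by simp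
  have "d_h G (Suc k) (m - k) (E (Suc k)) = 0"
    using closed top \<open>k \<le> m\<close> by (simp add: d_Tot_def Suc_diff_le cong: if_cong)
  then have de: "d_h G k (m - k) (row_contraction G k (m - k) (E (Suc k))) = E (Suc k)"
    using Ek by (intro d_h_row_contraction) (auto simp: A_lck_fixed_iff)
  define E' where "E' = (\<lambda>p. if p = k then row_contraction G k (m - k) (E (Suc k)) else 0)"
  have "E' \<in> Tot G T TA act m"
    unfolding E'_def using \<open>k \<le> m\<close> Ek by (intro Tot_single_column A_lck_fixed_row_contraction) auto
  moreover have "(E - d_Tot G m E') p = 0" if "p > k" for p
  proof (cases "p = Suc k")
    case True
    then show ?thesis
      using de \<open>k \<le> m\<close> by (simp add: d_Tot_def E'_def)
  next
    case False
    then have "p - 1 \<noteq> k" "p \<noteq> k"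
      using that by arith+
    then show ?thesis
      using that top by (simp add: d_Tot_def E'_def)
  qed
  ultimately show ?thesis
    by blast
qed

lemma Tot_column0_modulo_coboundaries:
  assumes "E \<in> Tot G T TA act n" and "\<forall>p>0. d_Tot G n E p = 0"
  shows "\<exists>B\<in>coboundaries (Tot G T TA act) (d_Tot G) n. \<forall>p>0. (E - B) p = 0"
proof -
  have "\<exists>B\<in>coboundaries (Tot G T TA act) (d_Tot G) n. \<forall>p>0. (E - B) p = 0"
    if "E \<in> Tot G T TA act n" "\<forall>p>0. d_Tot G n E p = 0" "\<forall>p>k. E p = 0" for k E
    using that
  proof (induction k arbitrary: E)
    case 0
    then show ?case
      using zero_in_coboundaries by (intro bexI[of _ 0]) simp_all
  next
    case (Suc k)
    show ?case
    proof (cases "Suc k \<le> n")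
      case False
      have "E p = 0" if "p > k" for p
      proof (cases "p = Suc k")
        case True
        then show ?thesis
          using False Suc.prems(1) by (simp add: Tot_def)
      qed (use that Suc.prems(3) Suc_lessI in blast)
      then show ?thesis
        using Suc.IH Suc.prems(1,2) by blast
    next
      case True
      then obtain m where n: "n = Suc m" and "k \<le> m"
        by (cases n) auto
      moreover have "d_Tot G n E (Suc (Suc k)) = 0"
        using Suc.prems(2) zero_less_Suc by blast
      ultimately obtain E' where E': "E' \<in> Tot G T TA act m" "\<forall>p>k. (E - d_Tot G m E') p = 0"
        using Tot_clear_top_column[of E m k] Suc.prems(1,3) by blast
      have "E - d_Tot G m E' \<in> Tot G T TA act n"
        using Suc.prems(1) E'(1) n by (simp add: Tot_diff Tot_d_Tot)
      moreover have "d_Tot G n (E - d_Tot G m E') = d_Tot G n E"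
        by (simp add: n d_Tot_diff d_Tot_d_Tot)
      then have "\<forall>p>0. d_Tot G n (E - d_Tot G m E') p = 0"
        using Suc.prems(2) by (simp only:)
      ultimately obtain B where B: "B \<in> coboundaries (Tot G T TA act) (d_Tot G) n"
          "\<forall>p>0. (E - d_Tot G m E' - B) p = 0"
        using Suc.IH E'(2) by blast
      have eq: "E - d_Tot G m E' - B = E - (B + d_Tot G m E')"
        by (simp add: algebra_simps)
      have "B + d_Tot G m E' \<in> coboundaries (Tot G T TA act) (d_Tot G) n"
        using B(1) E'(1) n by (simp add: coboundaries_add_d_Tot)
      then show ?thesis
        using B(2) unfolding eq by blast
    qed
  qed
  moreover have "\<forall>p>n. E p = 0"
    using assms(1) by (simp add: Tot_def)
  ultimately show ?thesis
    using assms by blast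
qed

lemma Tot_column0_eq_j_hk:
  assumes F: "F \<in> Tot G T TA act n" and column0: "\<forall>p>0. F p = 0"
    and closed: "d_Tot G n F (Suc 0) = 0"
  shows "\<exists>c\<in>C_lck G T TA act n. F = j_hk G n c"
proof -
  have F0: "F 0 \<in> A_lck_fixed G T TA act 0 n"
    using F unfolding Tot_def by force
  have "d_h G 0 n (F 0) = 0"
    using closed column0 by (simp add: d_Tot_def cong: if_cong)
  then have "j_hk G n (augmentation_retract G n (F 0)) 0 = F 0"
    using F0 by (intro j_hk_augmentation_retract) (auto simp: A_lck_fixed_iff)
  then have "F p = j_hk G n (augmentation_retract G n (F 0)) p" for p
    using column0 by (cases "p = 0") (simp_all add: j_hk_nonzero)
  then show ?thesis
    using C_lck_augmentation_retract[OF F0] by blast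
qed

lemma j_hk_cohomology_surj:
  assumes z: "z \<in> cocycles (Tot G T TA act) (d_Tot G) n"
  shows "\<exists>c\<in>cocycles (C_lck G T TA act) (d_C G) n. z - j_hk G n c \<in> coboundaries (Tot G T TA act) (d_Tot G) n"
proof -
  have zT: "z \<in> Tot G T TA act n" and dz: "d_Tot G n z = 0"
    using z by (auto simp: cocycles_def)
  then obtain B where B: "B \<in> coboundaries (Tot G T TA act) (d_Tot G) n" "\<forall>p>0. (z - B) p = 0"
    using Tot_column0_modulo_coboundaries by force
  have d_zB: "d_Tot G n (z - B) = 0"
    using dz B(1) by (simp add: d_Tot_diff d_Tot_coboundary)
  then have "d_Tot G n (z - B) (Suc 0) = 0"
    by simp
  moreover have "z - B \<in> Tot G T TA act n"
    using zT B(1) by (simp add: Tot_diff coboundaries_Tot)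
  ultimately obtain c where c: "c \<in> C_lck G T TA act n" "z - B = j_hk G n c"
    using Tot_column0_eq_j_hk[OF _ B(2)] by blast
  then have "j_hk G (Suc n) (d_C G n c) = j_hk G (Suc n) 0"
    using d_zB by (simp add: d_Tot_j_hk[symmetric])
  then have "d_C G n c = 0"
    by (rule j_hk_eq_imp_eq) (simp_all add: d_C_def)
  moreover have "z - j_hk G n c = B"
    by (simp add: c(2)[symmetric])
  ultimately show ?thesis
    using c(1) B(1) by (auto simp: cocycles_def)
qed

lemma j_hk_cohomology_inj:
  assumes c: "c \<in> C_lck G T TA act n" and jc: "j_hk G n c \<in> coboundaries (Tot G T TA act) (d_Tot G) n"
  shows "c \<in> coboundaries (C_lck G T TA act) (d_C G) n"
proof (cases n)
  case 0
  then have "j_hk G n c = j_hk G n 0"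
    using jc by (simp add: coboundaries_def)
  then have "c = 0"
    by (rule j_hk_eq_imp_eq) (use c in \<open>auto simp: C_lck_def\<close>)
  then show ?thesis
    using 0 by (simp add: coboundaries_def)
next
  case (Suc m)
  then obtain E where E: "E \<in> Tot G T TA act m" "d_Tot G m E = j_hk G n c"
    using jc by (auto simp: coboundaries_def)
  moreover have "\<forall>p>0. d_Tot G m E p = 0"
    using E(2) Suc by (simp add: j_hk_nonzero)
  ultimately obtain B where B: "B \<in> coboundaries (Tot G T TA act) (d_Tot G) m" "\<forall>p>0. (E - B) p = 0"
    using Tot_column0_modulo_coboundaries by blast
  have d_EB: "d_Tot G m (E - B) = j_hk G n c"
    using E(2) B(1) by (simp add: d_Tot_diff d_Tot_coboundary)
  then have "d_Tot G m (E - B) (Suc 0) = 0"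
    by (simp add: j_hk_nonzero)
  moreover have "E - B \<in> Tot G T TA act m"
    using E(1) B(1) by (simp add: Tot_diff coboundaries_Tot)
  ultimately obtain b where b: "b \<in> C_lck G T TA act m" "E - B = j_hk G m b"
    using Tot_column0_eq_j_hk[OF _ B(2)] by blast
  then have "j_hk G (Suc m) (d_C G m b) = j_hk G (Suc m) c"
    using d_EB Suc by (simp add: d_Tot_j_hk)
  then have "d_C G m b = c"
    by (rule j_hk_eq_imp_eq) (use c Suc in \<open>auto simp: d_C_def C_lck_def\<close>)
  then show ?thesis
    using b(1) Suc by (auto simp: coboundaries_def)
qed

end

theorem mainTheorem10:
  fixes G :: "('g, 'b) monoid_scheme" and T :: "'g topology"
    and TA :: "('a::ab_group_add) topology" and act :: "'g \<Rightarrow> 'a \<Rightarrow> 'a"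
  assumes "k_group G T"
    and "cont_G_module G T TA act"
  shows "cohomology_iso (C_lck G T TA act) (d_C G) (Tot G T TA act) (d_Tot G) (j_hk G)"
proof -
  interpret k_group_module G T TA act
    using assms by unfold_locales
  show ?thesis
    unfolding cohomology_iso_def
    using Tot_j_hk d_Tot_j_hk j_hk_cohomology_surj j_hk_cohomology_inj by (auto simp: cocycles_def)
qed

end
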